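(* For $k \ge 3$ let $L_k=\lim_{r\to\infty} R_r(k)^{1/r}$, and assume the Diagonal Conjecture (DC) holds: for every $r \ge 2$, all integers $3 \le s \le t$ and all integers $k_3,\dots,k_r \ge 2$, we have $R(s,t,k_3,\dots,k_r) \ge R(s-1,t+1,k_3,\dots,k_r)$. Then (a) either all $L_k$ ($k\ge 3$) are finite or all of them are infinite; and (b) if $L_3$ is finite, then $L_k < L_{k+1}$ for all $k \ge 3$.
   Context: $R(k_1,\dots,k_r)$ denotes the multicolor Ramsey number: the least $n$ such that every coloring of the edges of $K_n$ with $r$ colors contains, for some $i$, a complete subgraph $K_{k_i}$ all of whose edges have color $i$; it is symmetric in its arguments. $R_r(k)=R(k,\dots,k)$ with $r$ arguments equal to $k$. It is known (independently of DC) that each limit $L_k$ exists (possibly infinite) and $L_k \le L_{k+1}$. *)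

theory Defs
  imports "HOL-Analysis.Analysis"
begin

text \<open>Vertices of K_n are 0..n-1; an edge is a 2-element subset. A colouring with
  r = length ks colours assigns a colour < r to each edge. ks ! i is the clique
  size demanded in colour i.\<close>

definition ramsey_arrows :: "nat list \<Rightarrow> nat \<Rightarrow> bool" where
  "ramsey_arrows ks n \<longleftrightarrow>
     (\<forall>c :: nat set \<Rightarrow> nat.
        (\<forall>e. e \<subseteq> {..<n} \<and> card e = 2 \<longrightarrow> c e < length ks) \<longrightarrow>
        (\<exists>i < length ks. \<exists>S \<subseteq> {..<n}. card S = ks ! i \<and>
            (\<forall>e. e \<subseteq> S \<and> card e = 2 \<longrightarrow> c e = i)))"

definition ramsey_num :: "nat list \<Rightarrow> nat" where
  "ramsey_num ks = (LEAST n. ramsey_arrows ks n)"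

definition diag_ramsey :: "nat \<Rightarrow> nat \<Rightarrow> nat" where
  "diag_ramsey r k = ramsey_num (replicate r k)"

definition L_lim :: "nat \<Rightarrow> ereal" where
  "L_lim k = lim (\<lambda>r. ereal (root r (real (diag_ramsey r k))))"

definition diagonal_conjecture :: bool where
  "diagonal_conjecture \<longleftrightarrow>
     (\<forall>s t ks. 3 \<le> s \<and> s \<le> t \<and> (\<forall>k \<in> set ks. 2 \<le> k) \<longrightarrow>
        ramsey_num ((s - 1) # (t + 1) # ks) \<le> ramsey_num (s # t # ks))"

end

theory Submission
  imports Defs "HOL-Library.Ramsey"
begin

(* Write a_k(r) = R_r(k) - 1 (diag_crit r k below) for the largest order of a complete
   graph with an r-colouring free of monochromatic K_k. Blowing up every vertex of such a
   colouring of K_a by a copy of such a colouring of K_b gives a_k(r) a_k(s) <= a_k(r + s);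
   by the multiplicative Fekete lemma, L_k = sup_r a_k(r)^(1/r), and L_k >= k - 1. Under DC,
   m pairs of colours of clique size k can be traded one by one for pairs of sizes k - 1 and
   k + 1 without increasing the Ramsey number, so the same blow-up gives
   a_(k-1)(m) a_(k+1)(m) <= a_k(2m), and in the limit L_(k-1) L_(k+1) <= L_k^2. Since
   L_(k-1) >= 1 this yields L_(k+1) <= L_k^2, hence (a). If all L_k are finite,
   L_k = L_(k+1) together with log-concavity would make the sequence non-increasing from k
   on, contradicting L_j >= j - 1. *)

definition colouring :: "nat \<Rightarrow> nat \<Rightarrow> (nat set \<Rightarrow> nat) \<Rightarrow> bool" where
  "colouring n r c \<longleftrightarrow> (\<forall>e. e \<subseteq> {..<n} \<and> card e = 2 \<longrightarrow> c e < r)"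

definition monochrome :: "(nat set \<Rightarrow> nat) \<Rightarrow> nat set \<Rightarrow> nat \<Rightarrow> bool" where
  "monochrome c S i \<longleftrightarrow> (\<forall>e. e \<subseteq> S \<and> card e = 2 \<longrightarrow> c e = i)"

lemma ramsey_arrows_iff_colouring:
  "ramsey_arrows ks n \<longleftrightarrow>
     (\<forall>c. colouring n (length ks) c \<longrightarrow>
        (\<exists>i < length ks. \<exists>S \<subseteq> {..<n}. card S = ks ! i \<and> monochrome c S i))"
  by (simp add: ramsey_arrows_def colouring_def monochrome_def)

lemma colouring_iff: "colouring n r c \<longleftrightarrow> (\<forall>u<n. \<forall>v<n. u \<noteq> v \<longrightarrow> c {u, v} < r)"
proof
  assume "colouring n r c"
  then show "\<forall>u<n. \<forall>v<n. u \<noteq> v \<longrightarrow> c {u, v} < r"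
    unfolding colouring_def by (simp add: card_2_iff')
qed (auto simp: colouring_def card_2_iff)

lemma monochrome_iff: "monochrome c S i \<longleftrightarrow> (\<forall>u\<in>S. \<forall>v\<in>S. u \<noteq> v \<longrightarrow> c {u, v} = i)"
proof
  assume "monochrome c S i"
  then show "\<forall>u\<in>S. \<forall>v\<in>S. u \<noteq> v \<longrightarrow> c {u, v} = i"
    unfolding monochrome_def by (simp add: card_2_iff')
qed (auto simp: monochrome_def card_2_iff)

lemma monochrome_subset: "monochrome c S i \<Longrightarrow> T \<subseteq> S \<Longrightarrow> monochrome c T i"
  unfolding monochrome_def by blast

lemma monochrome_image:
  assumes "inj_on f S"
  shows "monochrome c (f ` S) i \<longleftrightarrow> monochrome (\<lambda>e. c (f ` e)) S i"
  using assms unfolding monochrome_iff inj_on_def by auto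

lemma ramsey_arrows_mono:
  assumes "ramsey_arrows ks m" "m \<le> n"
  shows "ramsey_arrows ks n"
proof -
  have "colouring m (length ks) c" if "colouring n (length ks) c" for c
    using that \<open>m \<le> n\<close> by (simp add: colouring_iff)
  then show ?thesis
    using assms unfolding ramsey_arrows_iff_colouring by (meson lessThan_subset_iff order_trans)
qed

lemma ramsey_arrows_ramsey_num: "ramsey_arrows ks (ramsey_num ks)"
proof -
  obtain N :: nat where N: "partn_lst {..<N} ks 2"
    using ramsey_full by blast
  have "ramsey_arrows ks N"
    unfolding ramsey_arrows_iff_colouring
  proof (intro allI impI)
    fix c assume "colouring N (length ks) c"
    then have "c \<in> nsets {..<N} 2 \<rightarrow> {..<length ks}"
      by (auto simp: colouring_def nsets_def)
    then obtain i H where "i < length ks" "H \<in> nsets {..<N} (ks ! i)" "c ` nsets H 2 \<subseteq> {i}"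
      using partn_lstE[OF N] by blast
    moreover have "monochrome c H i"
      unfolding monochrome_def
    proof (intro allI impI)
      fix e assume "e \<subseteq> H \<and> card e = 2"
      then have "e \<in> nsets H 2"
        by (simp add: nsets_def card_ge_0_finite)
      then show "c e = i"
        using \<open>c ` nsets H 2 \<subseteq> {i}\<close> by blast
    qed
    ultimately show "\<exists>i < length ks. \<exists>S \<subseteq> {..<N}. card S = ks ! i \<and> monochrome c S i"
      by (auto simp: nsets_def)
  qed
  then show ?thesis
    unfolding ramsey_num_def by (rule LeastI)
qed

lemma ramsey_arrows_iff_ramsey_num_le: "ramsey_arrows ks n \<longleftrightarrow> ramsey_num ks \<le> n"
  using ramsey_arrows_mono[OF ramsey_arrows_ramsey_num] Least_le[of "ramsey_arrows ks"]
  unfolding ramsey_num_def by blast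

lemma not_ramsey_arrows_less_ramsey_num: "\<not> ramsey_arrows ks n \<Longrightarrow> n < ramsey_num ks"
  by (simp add: ramsey_arrows_iff_ramsey_num_le)

lemma ramsey_arrows_permute:
  assumes "mset ks = mset ks'" "ramsey_arrows ks n"
  shows "ramsey_arrows ks' n"
  unfolding ramsey_arrows_iff_colouring
proof (intro allI impI)
  obtain p where p: "p permutes {..<length ks'}" "permute_list p ks' = ks"
    using mset_eq_permutation[OF assms(1)] by blast
  have len: "length ks = length ks'"
    using assms(1) by (metis size_mset)
  fix c assume "colouring n (length ks') c"
  then have "colouring n (length ks) (inv p \<circ> c)"
    using permutes_in_image[OF permutes_inv[OF p(1)]] len by (simp add: colouring_def)
  then obtain i S where i: "i < length ks" and S: "S \<subseteq> {..<n}" "card S = ks ! i"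
    and mono: "monochrome (inv p \<circ> c) S i"
    using assms(2) unfolding ramsey_arrows_iff_colouring by blast
  have "monochrome c S (p i)"
    using mono permutes_inv_eq[OF p(1)] by (auto simp: monochrome_def)
  moreover have "p i < length ks'" "ks' ! p i = ks ! i"
    using permutes_in_image[OF p(1)] permute_list_nth[OF p(1)] i len p(2) by auto
  ultimately show "\<exists>i < length ks'. \<exists>S \<subseteq> {..<n}. card S = ks' ! i \<and> monochrome c S i"
    using S by metis
qed

lemma ramsey_num_permute:
  assumes "mset ks = mset ks'" shows "ramsey_num ks = ramsey_num ks'"
proof -
  have "ramsey_arrows ks = ramsey_arrows ks'"
    using ramsey_arrows_permute[OF assms] ramsey_arrows_permute[OF assms[symmetric]] by blast
  then show ?thesis
    unfolding ramsey_num_def by simp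
qed

lemma ramsey_arrows_antimono:
  assumes "list_all2 (\<le>) ks ks'" "ramsey_arrows ks' n"
  shows "ramsey_arrows ks n"
  unfolding ramsey_arrows_iff_colouring
proof (intro allI impI)
  have len: "length ks = length ks'" and le: "\<And>i. i < length ks \<Longrightarrow> ks ! i \<le> ks' ! i"
    using assms(1) by (auto simp: list_all2_conv_all_nth)
  fix c assume "colouring n (length ks) c"
  then obtain i S where "i < length ks'" "S \<subseteq> {..<n}" "card S = ks' ! i" "monochrome c S i"
    using assms(2) len unfolding ramsey_arrows_iff_colouring by auto
  moreover obtain T where "T \<subseteq> S" "card T = ks ! i"
    using le \<open>i < length ks'\<close> \<open>card S = ks' ! i\<close> len by (metis obtain_subset_with_card_n)
  ultimately show "\<exists>i < length ks. \<exists>S \<subseteq> {..<n}. card S = ks ! i \<and> monochrome c S i"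
    using len monochrome_subset by (metis order_trans)
qed

lemma ramsey_num_mono: "list_all2 (\<le>) ks ks' \<Longrightarrow> ramsey_num ks \<le> ramsey_num ks'"
  using ramsey_arrows_antimono ramsey_arrows_ramsey_num ramsey_arrows_iff_ramsey_num_le by blast

(* Vertex v of K_(ab) stands for vertex v div b of K_a blown up to a copy of K_b. *)
definition blowup_colouring ::
    "nat \<Rightarrow> nat \<Rightarrow> (nat set \<Rightarrow> nat) \<Rightarrow> (nat set \<Rightarrow> nat) \<Rightarrow> nat set \<Rightarrow> nat" where
  "blowup_colouring b r cA cB e =
     (if card ((\<lambda>v. v div b) ` e) = 2 then cA ((\<lambda>v. v div b) ` e) else r + cB ((\<lambda>v. v mod b) ` e))"

lemma blowup_colouring_edge:
  assumes "u \<noteq> v"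
  shows "blowup_colouring b r cA cB {u, v} =
           (if u div b \<noteq> v div b then cA {u div b, v div b} else r + cB {u mod b, v mod b})"
  using assms by (auto simp: blowup_colouring_def)

lemma div_mod_eq_imp_eq: "u div b = v div b \<Longrightarrow> u mod b = v mod b \<Longrightarrow> u = (v :: nat)"
  by (metis div_mult_mod_eq)

lemma div_mod_less_if_less_mult:
  assumes "u < a * b" shows "u div b < a" "u mod b < (b :: nat)"
proof -
  have "0 < b"
    using assms by (cases "b = 0") auto
  then show "u div b < a" "u mod b < b"
    using assms by (simp_all add: less_mult_imp_div_less)
qed

lemma colouring_blowup:
  assumes "colouring a r cA" "colouring b s cB"
  shows "colouring (a * b) (r + s) (blowup_colouring b r cA cB)"
  unfolding colouring_iff
proof (intro allI impI)
  fix u v assume "u < a * b" "v < a * b" "u \<noteq> v"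
  then have "u div b < a" "v div b < a" "u mod b < b" "v mod b < b"
    "u div b = v div b \<Longrightarrow> u mod b \<noteq> v mod b"
    using div_mod_less_if_less_mult div_mod_eq_imp_eq by blast+
  then show "blowup_colouring b r cA cB {u, v} < r + s"
    using assms \<open>u \<noteq> v\<close> unfolding colouring_iff
    by (simp add: blowup_colouring_edge trans_less_add1)
qed

lemma monochrome_blowup_low:
  assumes "monochrome (blowup_colouring b r cA cB) S i" "i < r"
  shows "inj_on (\<lambda>v. v div b) S" "monochrome cA ((\<lambda>v. v div b) ` S) i"
proof -
  have edge: "u div b \<noteq> v div b \<and> cA {u div b, v div b} = i" if "u \<in> S" "v \<in> S" "u \<noteq> v" for u v
    using assms that by (auto simp: monochrome_iff blowup_colouring_edge split: if_splits)
  then show "inj_on (\<lambda>v. v div b) S"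
    by (meson inj_onI)
  moreover have "monochrome (\<lambda>e. cA ((\<lambda>v. v div b) ` e)) S i"
    using edge by (simp add: monochrome_iff)
  ultimately show "monochrome cA ((\<lambda>v. v div b) ` S) i"
    by (simp add: monochrome_image)
qed

lemma monochrome_blowup_high:
  assumes "colouring a r cA" "S \<subseteq> {..<a * b}"
    and "monochrome (blowup_colouring b r cA cB) S (r + j)"
  shows "inj_on (\<lambda>v. v mod b) S" "monochrome cB ((\<lambda>v. v mod b) ` S) j"
proof -
  have edge: "u div b = v div b \<and> cB {u mod b, v mod b} = j" if "u \<in> S" "v \<in> S" "u \<noteq> v" for u v
  proof -
    have "u div b < a" "v div b < a"
      using that assms(2) div_mod_less_if_less_mult by blast+
    then have "u div b \<noteq> v div b \<Longrightarrow> cA {u div b, v div b} < r"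
      using assms(1) by (simp add: colouring_iff)
    moreover have "blowup_colouring b r cA cB {u, v} = r + j"
      using assms(3) that by (simp add: monochrome_iff)
    ultimately show ?thesis
      by (auto simp: blowup_colouring_edge[OF that(3)] split: if_splits)
  qed
  then show "inj_on (\<lambda>v. v mod b) S"
    using div_mod_eq_imp_eq by (meson inj_onI)
  moreover have "monochrome (\<lambda>e. cB ((\<lambda>v. v mod b) ` e)) S j"
    using edge by (simp add: monochrome_iff)
  ultimately show "monochrome cB ((\<lambda>v. v mod b) ` S) j"
    by (simp add: monochrome_image)
qed

lemma not_ramsey_arrows_append_mult:
  assumes "\<not> ramsey_arrows A a" and "\<not> ramsey_arrows B b"
  shows "\<not> ramsey_arrows (A @ B) (a * b)"
proof
  obtain cA where cA: "colouring a (length A) cA"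
    and no_cA: "\<And>i S. i < length A \<Longrightarrow> S \<subseteq> {..<a} \<Longrightarrow> monochrome cA S i \<Longrightarrow> card S \<noteq> A ! i"
    using assms(1) unfolding ramsey_arrows_iff_colouring by blast
  obtain cB where cB: "colouring b (length B) cB"
    and no_cB: "\<And>i S. i < length B \<Longrightarrow> S \<subseteq> {..<b} \<Longrightarrow> monochrome cB S i \<Longrightarrow> card S \<noteq> B ! i"
    using assms(2) unfolding ramsey_arrows_iff_colouring by blast
  let ?c = "blowup_colouring b (length A) cA cB"
  assume "ramsey_arrows (A @ B) (a * b)"
  then obtain i S where i: "i < length A + length B" and S: "S \<subseteq> {..<a * b}"
    and card_S: "card S = (A @ B) ! i" and mono: "monochrome ?c S i"
    using colouring_blowup[OF cA cB] unfolding ramsey_arrows_iff_colouring by auto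
  show False
  proof (cases "i < length A")
    case True
    have "(\<lambda>v. v div b) ` S \<subseteq> {..<a}"
      using S div_mod_less_if_less_mult by auto
    then have "card ((\<lambda>v. v div b) ` S) \<noteq> A ! i"
      using no_cA[OF True] monochrome_blowup_low[OF mono True] by blast
    then show False
      using monochrome_blowup_low[OF mono True] card_S True by (simp add: card_image nth_append)
  next
    case False
    define j where "j = i - length A"
    have j: "j < length B" "i = length A + j"
      using i False by (auto simp: j_def)
    note high = monochrome_blowup_high[OF cA S mono[unfolded j(2)]]
    have "(\<lambda>v. v mod b) ` S \<subseteq> {..<b}"
      using S div_mod_less_if_less_mult by auto
    then have "card ((\<lambda>v. v mod b) ` S) \<noteq> B ! j"
      using no_cB[OF j(1)] high by blast
    then show False
      using high card_S j by (simp add: card_image nth_append)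
  qed
qed

lemma not_ramsey_arrows_Nil: "\<not> ramsey_arrows [] 1"
  by (simp add: ramsey_arrows_iff_colouring colouring_iff)

lemma not_ramsey_arrows_single:
  assumes "0 < k" shows "\<not> ramsey_arrows [k] (k - 1)"
proof -
  have "card S < k" if "S \<subseteq> {..<k - 1}" for S
    using card_mono[OF finite_lessThan that] assms by simp
  then show ?thesis
    unfolding ramsey_arrows_iff_colouring colouring_def
    by (auto intro!: exI[of _ "\<lambda>_. 0"] dest: less_imp_neq)
qed

lemma not_ramsey_arrows_replicate:
  assumes "0 < k" shows "\<not> ramsey_arrows (replicate r k) ((k - 1) ^ r)"
proof (induction r)
  case 0
  then show ?case
    using not_ramsey_arrows_Nil by simp
next
  case (Suc r)
  then show ?case
    using not_ramsey_arrows_append_mult[OF not_ramsey_arrows_single[OF assms] Suc.IH] by simp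
qed

definition diag_crit :: "nat \<Rightarrow> nat \<Rightarrow> nat" where
  "diag_crit r k = diag_ramsey r k - 1"

lemma diag_ramsey_eq_Suc_diag_crit:
  assumes "0 < k" shows "diag_ramsey r k = Suc (diag_crit r k)"
  using not_ramsey_arrows_less_ramsey_num[OF not_ramsey_arrows_replicate[OF assms, of r]]
  unfolding diag_crit_def diag_ramsey_def by linarith

lemma not_ramsey_arrows_diag_crit:
  assumes "0 < k" shows "\<not> ramsey_arrows (replicate r k) (diag_crit r k)"
  using diag_ramsey_eq_Suc_diag_crit[OF assms]
  by (simp add: ramsey_arrows_iff_ramsey_num_le diag_ramsey_def)

lemma diag_crit_ge_power:
  assumes "0 < k" shows "(k - 1) ^ r \<le> diag_crit r k"
  using not_ramsey_arrows_less_ramsey_num[OF not_ramsey_arrows_replicate[OF assms, of r]]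
  unfolding diag_crit_def diag_ramsey_def by linarith

lemma diag_crit_supermult:
  assumes "0 < k" shows "diag_crit r k * diag_crit s k \<le> diag_crit (r + s) k"
proof -
  have "\<not> ramsey_arrows (replicate (r + s) k) (diag_crit r k * diag_crit s k)"
    using not_ramsey_arrows_append_mult[OF not_ramsey_arrows_diag_crit not_ramsey_arrows_diag_crit]
      assms by (simp add: replicate_add)
  then show ?thesis
    using diag_ramsey_eq_Suc_diag_crit[OF assms]
    by (simp add: ramsey_arrows_iff_ramsey_num_le diag_ramsey_def)
qed

lemma diag_crit_mono:
  assumes "k \<le> k'" shows "diag_crit r k \<le> diag_crit r k'"
  using ramsey_num_mono[of "replicate r k" "replicate r k'"] assms
  by (simp add: diag_crit_def diag_ramsey_def list_all2_conv_all_nth diff_le_mono)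

lemma ramsey_num_replicate_le_diagonal_conjecture:
  assumes dc: "diagonal_conjecture" and k: "3 \<le> k"
  shows "ramsey_num (replicate j (k - 1) @ replicate j (k + 1) @ replicate (2 * n) k)
           \<le> ramsey_num (replicate (2 * (j + n)) k)"
proof (induction j arbitrary: n)
  case 0
  then show ?case by simp
next
  case (Suc j)
  define rest where "rest = replicate j (k - 1) @ replicate j (k + 1) @ replicate (2 * n) k"
  have "ramsey_num (replicate (Suc j) (k - 1) @ replicate (Suc j) (k + 1) @ replicate (2 * n) k)
        = ramsey_num ((k - 1) # (k + 1) # rest)"
    by (rule ramsey_num_permute) (simp add: rest_def)
  also have "\<dots> \<le> ramsey_num (k # k # rest)"
    using dc k unfolding diagonal_conjecture_def rest_def by force
  also have "\<dots> = ramsey_num (replicate j (k - 1) @ replicate j (k + 1) @ replicate (2 * Suc n) k)"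
    by (rule ramsey_num_permute) (simp add: rest_def)
  also have "\<dots> \<le> ramsey_num (replicate (2 * (Suc j + n)) k)"
    using Suc.IH[of "Suc n"] by simp
  finally show ?case .
qed

lemma diag_crit_diagonal_conjecture:
  assumes dc: "diagonal_conjecture" and k: "3 \<le> k"
  shows "diag_crit m (k - 1) * diag_crit m (k + 1) \<le> diag_crit (2 * m) k"
proof -
  have "\<not> ramsey_arrows (replicate m (k - 1) @ replicate m (k + 1))
           (diag_crit m (k - 1) * diag_crit m (k + 1))"
    using k by (intro not_ramsey_arrows_append_mult not_ramsey_arrows_diag_crit) auto
  then have "diag_crit m (k - 1) * diag_crit m (k + 1) < ramsey_num (replicate (2 * m) k)"
    using ramsey_num_replicate_le_diagonal_conjecture[OF dc k, of m 0]
    by (simp add: ramsey_arrows_iff_ramsey_num_le)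
  then show ?thesis
    using diag_ramsey_eq_Suc_diag_crit[of k "2 * m"] k by (simp add: diag_ramsey_def)
qed

context
  fixes a :: "nat \<Rightarrow> real"
  assumes ge_1: "\<And>n. 1 \<le> a n"
    and supermult: "\<And>m n. a m * a n \<le> a (m + n)"
begin

lemma supermult_power_div_le: "a m ^ (r div m) \<le> a r"
proof -
  have power_le: "a m ^ q \<le> a (q * m)" for q
  proof (induction q)
    case 0
    then show ?case using ge_1 by simp
  next
    case (Suc q)
    have "a m ^ Suc q \<le> a m * a (q * m)"
      using Suc.IH ge_1[of m] by simp
    also have "\<dots> \<le> a (Suc q * m)"
      using supermult[of m "q * m"] by simp
    finally show ?case .
  qed
  have "a m ^ (r div m) \<le> a (r div m * m) * a (r mod m)"
    using power_le[of "r div m"] ge_1[of "r mod m"] ge_1[of "r div m * m"]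
    by (metis mult.right_neutral mult_mono order_trans zero_le_one)
  also have "\<dots> \<le> a r"
    using supermult[of "r div m * m" "r mod m"] by simp
  finally show ?thesis .
qed

lemma supermult_root_ge:
  assumes "0 < m" "0 < r"
  shows "root m (a m) / root r (a m) \<le> root r (a r)"
proof -
  have a_pos: "0 < a m"
    using ge_1[of m] by simp
  have "r < (r div m + 1) * m"
    using dividend_less_div_times[OF assms(1), of r] by (simp add: algebra_simps)
  then have "real r < (real (r div m) + 1) * real m"
    by (metis of_nat_less_iff of_nat_mult of_nat_Suc add.commute plus_1_eq_Suc)
  then have "real r * real r \<le> (real (r div m) + 1) * real m * real r"
    using assms by (intro mult_right_mono) auto
  then have "1 / real m - 1 / real r \<le> real (r div m) / real r"
    using assms by (simp add: field_simps)
  then have "a m powr (1 / real m - 1 / real r) \<le> a m powr (real (r div m) / real r)"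
    using ge_1[of m] by (intro powr_mono) auto
  also have "\<dots> = root r (a m ^ (r div m))"
    using assms a_pos by (simp add: root_powr_inverse powr_realpow[symmetric] powr_powr)
  also have "\<dots> \<le> root r (a r)"
    using assms supermult_power_div_le a_pos by (simp add: real_root_le_mono)
  finally show ?thesis
    using assms a_pos by (simp add: powr_diff root_powr_inverse)
qed

lemma supermult_root_tendsto_SUP:
  "(\<lambda>n. ereal (root n (a n))) \<longlonglongrightarrow> (SUP n\<in>{0<..}. ereal (root n (a n)))"
proof (rule order_tendstoI)
  fix y assume "y < (SUP n\<in>{0<..}. ereal (root n (a n)))"
  then obtain m where m: "0 < m" "y < ereal (root m (a m))"
    by (auto simp: less_SUP_iff)
  have "(\<lambda>r. root m (a m) / root r (a m)) \<longlonglongrightarrow> root m (a m) / 1"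
    using ge_1[of m] by (intro tendsto_divide LIMSEQ_root_const) auto
  then have "\<forall>\<^sub>F r in sequentially. y < ereal (root m (a m) / root r (a m))"
    using m(2) by (auto intro: order_tendstoD(1) lim_ereal[THEN iffD2])
  then show "\<forall>\<^sub>F r in sequentially. y < ereal (root r (a r))"
    using eventually_gt_at_top[of "0::nat"]
  proof eventually_elim
    case (elim r)
    then show ?case
      using supermult_root_ge[OF m(1), of r] by (meson ereal_less_eq(3) order_less_le_trans)
  qed
next
  fix y assume y: "(SUP n\<in>{0<..}. ereal (root n (a n))) < y"
  show "\<forall>\<^sub>F r in sequentially. ereal (root r (a r)) < y"
    using eventually_gt_at_top[of "0::nat"]
  proof eventually_elim
    case (elim r)
    then have "ereal (root r (a r)) \<le> (SUP n\<in>{0<..}. ereal (root n (a n)))"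
      by (intro SUP_upper) auto
    then show ?case
      using y by (rule order_le_less_trans)
  qed
qed

end

lemma tendsto_root_diag_crit:
  assumes "2 \<le> k"
  shows "(\<lambda>r. ereal (root r (diag_crit r k))) \<longlonglongrightarrow> L_lim k"
proof -
  define S where "S = (SUP n\<in>{0<..}. ereal (root n (diag_crit n k)))"
  have ge_1: "1 \<le> real (diag_crit r k)" for r
  proof -
    have "1 \<le> (k - 1) ^ r"
      using assms by simp
    then have "1 \<le> diag_crit r k"
      using diag_crit_ge_power[of k r] assms by (meson order_trans zero_less_numeral less_le_trans)
    then show ?thesis
      by simp
  qed
  have lower: "(\<lambda>r. ereal (root r (diag_crit r k))) \<longlonglongrightarrow> S"
    unfolding S_def using ge_1 diag_crit_supermult[of k] assms
    by (intro supermult_root_tendsto_SUP) (simp_all flip: of_nat_mult)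
  have "(\<lambda>r. ereal (root r 2) * ereal (root r (diag_crit r k))) \<longlonglongrightarrow> ereal 1 * S"
    by (intro tendsto_mult_ereal lower lim_ereal[THEN iffD2] LIMSEQ_root_const) auto
  then have upper: "(\<lambda>r. ereal (root r (2 * diag_crit r k))) \<longlonglongrightarrow> S"
    by (simp add: real_root_mult)
  have "(\<lambda>r. ereal (root r (diag_ramsey r k))) \<longlonglongrightarrow> S"
  proof (rule tendsto_sandwich[OF _ _ lower upper])
    have "real (diag_crit r k) \<le> real (diag_ramsey r k)"
      "real (diag_ramsey r k) \<le> 2 * real (diag_crit r k)" for r
      using diag_ramsey_eq_Suc_diag_crit[of k r] ge_1[of r] assms by simp_all
    then show "\<forall>\<^sub>F r in sequentially. ereal (root r (diag_crit r k)) \<le> ereal (root r (diag_ramsey r k))"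
      "\<forall>\<^sub>F r in sequentially. ereal (root r (diag_ramsey r k)) \<le> ereal (root r (2 * diag_crit r k))"
      by (auto intro!: eventually_mono[OF eventually_gt_at_top[of 0]] real_root_le_mono)
  qed
  then have "L_lim k = S"
    unfolding L_lim_def by (rule limI)
  then show ?thesis
    using lower by simp
qed

lemma L_lim_ge:
  assumes "2 \<le> k" shows "ereal (real k - 1) \<le> L_lim k"
proof (rule tendsto_lowerbound[OF tendsto_root_diag_crit[OF assms]])
  have "real k - 1 \<le> root r (diag_crit r k)" if "0 < r" for r
  proof -
    have "real k - 1 = root r ((real k - 1) ^ r)"
      using that assms by (simp add: real_root_power_cancel)
    also have "\<dots> \<le> root r (diag_crit r k)"
    proof (rule real_root_le_mono[OF that])
      have "(real k - 1) ^ r = real ((k - 1) ^ r)"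
        using assms by (simp add: of_nat_diff)
      also have "\<dots> \<le> real (diag_crit r k)"
        using diag_crit_ge_power[of k r] assms by (simp only: of_nat_le_iff)
      finally show "(real k - 1) ^ r \<le> real (diag_crit r k)" .
    qed
    finally show ?thesis .
  qed
  then show "\<forall>\<^sub>F r in sequentially. ereal (real k - 1) \<le> ereal (root r (diag_crit r k))"
    by (auto intro: eventually_mono[OF eventually_gt_at_top[of 0]])
qed simp

lemma L_lim_ge_1:
  assumes "2 \<le> k" shows "1 \<le> L_lim k"
proof -
  have "ereal 1 \<le> ereal (real k - 1)"
    using assms by simp
  then have "ereal 1 \<le> L_lim k"
    using L_lim_ge[OF assms] by (rule order_trans)
  then show ?thesis
    by (simp add: one_ereal_def)
qed

lemma L_lim_mono:
  assumes "2 \<le> k" "k \<le> k'" shows "L_lim k \<le> L_lim k'"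
proof (rule LIMSEQ_le[OF tendsto_root_diag_crit tendsto_root_diag_crit])
  show "\<exists>N. \<forall>r\<ge>N. ereal (root r (diag_crit r k)) \<le> ereal (root r (diag_crit r k'))"
    using diag_crit_mono[OF assms(2)] by (auto intro!: exI[of _ 1] real_root_le_mono)
qed (use assms in auto)

lemma L_lim_log_concave:
  assumes dc: "diagonal_conjecture" and k: "3 \<le> k"
  shows "L_lim (k - 1) * L_lim (Suc k) \<le> L_lim k ^ 2"
proof -
  define \<rho> where "\<rho> j r = ereal (root r (diag_crit r j))" for j r
  have nonzero: "L_lim j \<noteq> 0" if "2 \<le> j" for j
    using L_lim_ge_1[OF that] by auto
  have \<rho>_tendsto: "\<rho> j \<longlonglongrightarrow> L_lim j" if "2 \<le> j" for j
    unfolding \<rho>_def using tendsto_root_diag_crit[OF that] .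
  have "(\<lambda>r. \<rho> (k - 1) r * \<rho> (Suc k) r) \<longlonglongrightarrow> L_lim (k - 1) * L_lim (Suc k)"
    using k nonzero by (intro tendsto_mult_ereal \<rho>_tendsto) auto
  moreover have "(\<lambda>r. \<rho> k (2 * r) * \<rho> k (2 * r)) \<longlonglongrightarrow> L_lim k * L_lim k"
  proof -
    have "(\<lambda>r. \<rho> k (2 * r)) \<longlonglongrightarrow> L_lim k"
      using LIMSEQ_subseq_LIMSEQ[OF \<rho>_tendsto[of k], of "\<lambda>r. 2 * r"] k
      by (simp add: strict_mono_def o_def)
    then show ?thesis
      using k nonzero by (intro tendsto_mult_ereal) auto
  qed
  moreover have "\<rho> (k - 1) r * \<rho> (Suc k) r \<le> \<rho> k (2 * r) * \<rho> k (2 * r)" if "1 \<le> r" for r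
  proof -
    have "root r (diag_crit r (k - 1)) * root r (diag_crit r (Suc k))
          = root r (diag_crit r (k - 1) * diag_crit r (k + 1))"
      by (simp add: real_root_mult)
    also have "\<dots> \<le> root r (diag_crit (2 * r) k)"
      using diag_crit_diagonal_conjecture[OF dc k, of r] that
      by (intro real_root_le_mono) (simp_all flip: of_nat_mult)
    also have "\<dots> = root (2 * r) (diag_crit (2 * r) k) ^ 2"
      by (simp add: real_root_mult_exp real_root_ge_zero)
    finally show ?thesis
      by (simp add: \<rho>_def power2_eq_square)
  qed
  ultimately show ?thesis
    unfolding power2_eq_square by (blast intro: LIMSEQ_le)
qed

lemma log_concave_unbounded_imp_less:
  fixes x :: "nat \<Rightarrow> real"
  assumes pos: "\<And>j. k \<le> j \<Longrightarrow> 0 < x j"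
    and log_concave: "\<And>j. k \<le> j \<Longrightarrow> x j * x (j + 2) \<le> x (j + 1) ^ 2"
    and unbounded: "\<And>B. \<exists>j\<ge>k. B < x j"
  shows "x k < x (Suc k)"
proof (rule ccontr)
  assume "\<not> x k < x (Suc k)"
  have decreasing: "x (k + n + 1) \<le> x (k + n)" for n
  proof (induction n)
    case 0
    then show ?case
      using \<open>\<not> x k < x (Suc k)\<close> by simp
  next
    case (Suc n)
    have "x (k + n) * x (k + n + 2) \<le> x (k + n + 1) ^ 2"
      using log_concave[of "k + n"] by simp
    also have "\<dots> \<le> x (k + n) * x (k + n + 1)"
      using Suc.IH pos[of "k + n + 1"] by (simp add: power2_eq_square mult_right_mono)
    finally show ?case
      using pos[of "k + n"] by simp
  qed
  have "x (k + n) \<le> x k" for n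
    by (induction n) (use decreasing order_trans in auto)
  then show False
    using unbounded[of "x k"] by (metis le_add_diff_inverse not_le)
qed

lemma L_lim_Suc_less_infinity:
  assumes dc: "diagonal_conjecture" and k: "3 \<le> k" and fin: "L_lim k < \<infinity>"
  shows "L_lim (Suc k) < \<infinity>"
proof -
  have "1 \<le> L_lim (k - 1)" "1 \<le> L_lim (Suc k)"
    using L_lim_ge_1[of "k - 1"] L_lim_ge_1[of "Suc k"] k by simp_all
  then have "L_lim (Suc k) \<le> L_lim (k - 1) * L_lim (Suc k)"
    using ereal_mult_right_mono[of 1 "L_lim (k - 1)" "L_lim (Suc k)"] order_trans[of 0 1 "L_lim (Suc k)"]
    by simp
  also have "\<dots> \<le> L_lim k ^ 2"
    by (rule L_lim_log_concave[OF dc k])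
  also have "\<dots> < \<infinity>"
    using fin L_lim_ge_1[of k] k by (cases "L_lim k") auto
  finally show ?thesis .
qed

lemma L_lim_less_infinity:
  assumes dc: "diagonal_conjecture" and fin: "L_lim 3 < \<infinity>" and k: "3 \<le> k"
  shows "L_lim k < \<infinity>"
  using k by (induction k rule: dec_induct) (use fin L_lim_Suc_less_infinity[OF dc] in auto)

lemma L_lim_strict_mono:
  assumes dc: "diagonal_conjecture" and fin: "L_lim 3 < \<infinity>" and k: "3 \<le> k"
  shows "L_lim k < L_lim (Suc k)"
proof -
  define x where "x j = real_of_ereal (L_lim j)" for j
  have L_lim_eq: "L_lim j = ereal (x j)" and x_ge: "real j - 1 \<le> x j" if "k \<le> j" for j
  proof -
    have "ereal (real j - 1) \<le> L_lim j" "L_lim j < \<infinity>"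
      using that k L_lim_ge[of j] L_lim_less_infinity[OF dc fin, of j] by auto
    then show "L_lim j = ereal (x j)" "real j - 1 \<le> x j"
      unfolding x_def by (cases "L_lim j"; simp)+
  qed
  have "x k < x (Suc k)"
  proof (rule log_concave_unbounded_imp_less)
    show "0 < x j" if "k \<le> j" for j
      using x_ge[OF that] that k by simp
    show "x j * x (j + 2) \<le> x (j + 1) ^ 2" if "k \<le> j" for j
      using L_lim_log_concave[OF dc, of "Suc j"] that k
      by (simp add: L_lim_eq numeral_2_eq_2 del: ereal_power)
    show "\<exists>j\<ge>k. B < x j" for B
    proof (intro exI conjI)
      show "B < x (k + nat \<lceil>B\<rceil> + 2)"
        using x_ge[of "k + nat \<lceil>B\<rceil> + 2"] by linarith
    qed simp
  qed
  then show ?thesis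
    using L_lim_eq[of k] L_lim_eq[of "Suc k"] by simp
qed

theorem corollary4:
  assumes "diagonal_conjecture"
  shows "((\<forall>k\<ge>3. L_lim k < \<infinity>) \<or> (\<forall>k\<ge>3. L_lim k = \<infinity>))
     \<and> (L_lim 3 < \<infinity> \<longrightarrow> (\<forall>k\<ge>3. L_lim k < L_lim (Suc k)))"
proof (intro conjI impI allI)
  show "(\<forall>k\<ge>3. L_lim k < \<infinity>) \<or> (\<forall>k\<ge>3. L_lim k = \<infinity>)"
  proof (cases "L_lim 3 < \<infinity>")
    case True
    then show ?thesis
      using L_lim_less_infinity[OF assms] by blast
  next
    case False
    then have "L_lim k = \<infinity>" if "3 \<le> k" for k
      using L_lim_mono[of 3 k] that by (simp add: top.extremum_unique)
    then show ?thesis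
      by blast
  qed
next
  show "L_lim k < L_lim (Suc k)" if "L_lim 3 < \<infinity>" "3 \<le> k" for k
    using L_lim_strict_mono[OF assms that] .
qed

end
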